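(* Let $\mathcal C$ be an open (i.e. non-closed) convex curve whose radius of curvature satisfies $\rho\ge R_1$ at every point, for some constant $R_1>0$, and let $\mathcal L$ be a lattice in $\mathbb R^2$. Then $$\#(\mathcal C\cap\mathcal L)<4+\frac{\mathrm{Length}(\mathcal C)}{(A_{\mathcal L}R_1)^{1/3}}.$$ If in addition the total curvature satisfies $\int_{\mathcal C}\kappa\,ds\le\pi$, then $$\#(\mathcal C\cap\mathcal L)<2+\frac{\mathrm{Length}(\mathcal C)}{(A_{\mathcal L}R_1)^{1/3}}.$$
   Context: A lattice is a set $\mathcal L=\mathcal L(v_0,v_1,v_2)=\{v_0+mv_1+nv_2: m,n\in\mathbb Z\}$ where $v_0,v_1,v_2\in\mathbb R^2$ and $v_1,v_2$ are linearly independent. Its invariant is $A_{\mathcal L}=|\det(v_1,v_2)|$. All curves are of class $C^2$ with nonvanishing first and second derivative vectors, oriented so that the curvature $\kappa$ is positive; a convex curve is such a curve lying on the boundary of a convex planar region, and an open convex curve is a non-closed arc of such a boundary. The radius of curvature is $\rho=1/\kappa$, $s$ is arclength, and the total curvature is $\int_{\mathcal C}\kappa\,ds$. *)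

theory Defs
  imports "HOL-Analysis.Analysis"
begin

definition det2 :: "real^2 \<Rightarrow> real^2 \<Rightarrow> real" where
  "det2 u v = u$1 * v$2 - u$2 * v$1"

definition lattice :: "real^2 \<Rightarrow> real^2 \<Rightarrow> real^2 \<Rightarrow> (real^2) set" where
  "lattice v0 v1 v2 = {v0 + of_int m *\<^sub>R v1 + of_int n *\<^sub>R v2 | m n :: int. True}"

definition lattice_invariant :: "real^2 \<Rightarrow> real^2 \<Rightarrow> real" where
  "lattice_invariant v1 v2 = \<bar>det2 v1 v2\<bar>"

definition C2_pos_curve ::
  "(real \<Rightarrow> real^2) \<Rightarrow> (real \<Rightarrow> real^2) \<Rightarrow> (real \<Rightarrow> real^2) \<Rightarrow> real \<Rightarrow> real \<Rightarrow> bool" where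
  "C2_pos_curve \<gamma> g1 g2 a b \<longleftrightarrow> a < b \<and>
     (\<forall>t\<in>{a..b}. (\<gamma> has_vector_derivative g1 t) (at t within {a..b}) \<and>
                  (g1 has_vector_derivative g2 t) (at t within {a..b})) \<and>
     continuous_on {a..b} g2 \<and>
     (\<forall>t\<in>{a..b}. g1 t \<noteq> 0 \<and> g2 t \<noteq> 0 \<and> det2 (g1 t) (g2 t) > 0)"

definition curvature :: "(real \<Rightarrow> real^2) \<Rightarrow> (real \<Rightarrow> real^2) \<Rightarrow> real \<Rightarrow> real" where
  "curvature g1 g2 t = det2 (g1 t) (g2 t) / norm (g1 t) ^ 3"

text \<open>An open convex curve: a non-closed (simple) arc of the boundary of a convex
  planar region.\<close>
definition open_convex_curve ::
  "(real \<Rightarrow> real^2) \<Rightarrow> (real \<Rightarrow> real^2) \<Rightarrow> (real \<Rightarrow> real^2) \<Rightarrow> real \<Rightarrow> real \<Rightarrow> bool" where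
  "open_convex_curve \<gamma> g1 g2 a b \<longleftrightarrow> C2_pos_curve \<gamma> g1 g2 a b \<and>
     inj_on \<gamma> {a..b} \<and>
     (\<exists>K::(real^2) set. convex K \<and> interior K \<noteq> {} \<and> \<gamma> ` {a..b} \<subseteq> frontier K)"

definition curve_length :: "(real \<Rightarrow> real^2) \<Rightarrow> real \<Rightarrow> real \<Rightarrow> real" where
  "curve_length g1 a b = integral {a..b} (\<lambda>t. norm (g1 t))"

definition total_curvature ::
  "(real \<Rightarrow> real^2) \<Rightarrow> (real \<Rightarrow> real^2) \<Rightarrow> real \<Rightarrow> real \<Rightarrow> real" where
  "total_curvature g1 g2 a b = integral {a..b} (\<lambda>t. curvature g1 g2 t * norm (g1 t))"

end

theory Submission
  imports Defs
begin

text \<open>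
  Parametrise by arclength. The unit tangent turns with speed \<open>\<kappa> \<le> 1/R1\<close>, so for three points
  of the curve separated by arclengths \<open>\<alpha>\<close> and \<open>\<beta>\<close>, twice the area of their triangle is at
  most \<open>\<alpha>\<beta>(\<alpha> + \<beta>)/(2 R1) \<le> (\<alpha> + \<beta>)^3/(8 R1)\<close>. Three points of an arc of positive
  curvature on the boundary of a convex region are never collinear, so for lattice points this
  doubled area is at least the invariant \<open>A\<close> of the lattice. Hence any three consecutive lattice
  points on the curve span arclength at least \<open>2 (A R1)^(1/3)\<close>, and the curve carries fewer than
  \<open>2 + Length/(A R1)^(1/3)\<close> lattice points. This implies both bounds.
\<close>

section \<open>The planar determinant\<close>

lemma det2_add_left: "det2 (x + y) z = det2 x z + det2 y z"
  by (simp add: det2_def algebra_simps)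

lemma det2_add_right: "det2 z (x + y) = det2 z x + det2 z y"
  by (simp add: det2_def algebra_simps)

lemma det2_diff_left: "det2 (x - y) z = det2 x z - det2 y z"
  by (simp add: det2_def algebra_simps)

lemma det2_diff_right: "det2 z (x - y) = det2 z x - det2 z y"
  by (simp add: det2_def algebra_simps)

lemma det2_scaleR_left: "det2 (c *\<^sub>R x) z = c * det2 x z"
  by (simp add: det2_def algebra_simps)

lemma det2_scaleR_right: "det2 z (c *\<^sub>R x) = c * det2 z x"
  by (simp add: det2_def algebra_simps)

lemma det2_self [simp]: "det2 x x = 0"
  by (simp add: det2_def)

lemmas det2_linear =
  det2_add_left det2_add_right det2_diff_left det2_diff_right det2_scaleR_left det2_scaleR_right

lemma det2_sgn: "det2 x y = norm x * norm y * det2 (sgn x) (sgn y)"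
proof (cases "x = 0 \<or> y = 0")
  case True
  thus ?thesis by (auto simp: det2_def)
next
  case False
  thus ?thesis by (simp add: sgn_div_norm det2_scaleR_left det2_scaleR_right field_simps)
qed

lemma bounded_linear_det2_left: "bounded_linear (\<lambda>w. det2 w z)"
  unfolding linear_conv_bounded_linear[symmetric] by (rule linearI) (simp_all add: det2_linear)

lemma bounded_linear_det2_right: "bounded_linear (\<lambda>w. det2 z w)"
  unfolding linear_conv_bounded_linear[symmetric] by (rule linearI) (simp_all add: det2_linear)

lemma det2_squared_plus_inner_squared: "(det2 x y)\<^sup>2 + (x \<bullet> y)\<^sup>2 = (norm x)\<^sup>2 * (norm y)\<^sup>2"
  unfolding power2_norm_eq_inner by (simp add: inner_vec_def sum_2 det2_def power2_eq_square algebra_simps)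

lemma abs_det2_le_norm_mult: "\<bar>det2 x y\<bar> \<le> norm x * norm y"
proof -
  have "\<bar>det2 x y\<bar> \<le> \<bar>norm x * norm y\<bar>"
    unfolding abs_le_square_iff power_mult_distrib
    using det2_squared_plus_inner_squared[of x y] zero_le_power2[of "x \<bullet> y"] by linarith
  thus ?thesis by simp
qed

lemma det2_eq_0_imp_scaleR:
  assumes "d \<noteq> 0" "det2 d v = 0"
  shows "\<exists>c. v = c *\<^sub>R d"
proof -
  have dd: "d \<bullet> d \<noteq> 0" using assms by auto
  have e: "d$1 * v$2 = d$2 * v$1" using assms(2) by (simp add: det2_def)
  have "v$i * (d \<bullet> d) = (v \<bullet> d) * d$i" if "i = 1 \<or> i = 2" for i
    using that e by (auto simp: inner_vec_def sum_2 algebra_simps)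
  hence "v$i = ((v \<bullet> d) / (d \<bullet> d)) * d$i" if "i = 1 \<or> i = 2" for i
    using that dd by (simp add: field_simps)
  hence "v = ((v \<bullet> d) / (d \<bullet> d)) *\<^sub>R d"
    by (auto simp: vec_eq_iff forall_2)
  thus ?thesis ..
qed

lemma det2_eq_0_if_orthogonal:
  assumes "n \<noteq> 0" "n \<bullet> v = 0" "n \<bullet> w = 0"
  shows "det2 v w = 0"
proof -
  have "det2 v w * n$1 = (n \<bullet> v) * w$2 - (n \<bullet> w) * v$2"
    and "det2 v w * n$2 = (n \<bullet> w) * v$1 - (n \<bullet> v) * w$1"
    by (simp_all add: det2_def inner_vec_def sum_2 algebra_simps)
  moreover have "n$1 \<noteq> 0 \<or> n$2 \<noteq> 0"
    using assms(1) by (auto simp: vec_eq_iff forall_2)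
  ultimately show ?thesis using assms(2,3) by auto
qed

lemma collinear_if_det2_eq_0:
  assumes "det2 (q - p) (r - q) = 0"
  shows "collinear {p, q, r}"
proof (cases "p = q")
  case False
  have "det2 (p - q) (r - q) = - det2 (q - p) (r - q)"
    by (simp add: det2_def algebra_simps)
  then obtain c where "r - q = c *\<^sub>R (p - q)"
    using det2_eq_0_imp_scaleR[of "p - q" "r - q"] assms False by auto
  thus ?thesis by (subst collinear_3) (auto simp: collinear_lemma)
qed auto

section \<open>Lattices\<close>

lemma lattice_invariant_le_abs_det2:
  assumes "p \<in> lattice v0 v1 v2" "q \<in> lattice v0 v1 v2" "r \<in> lattice v0 v1 v2"
    and nonzero: "det2 (q - p) (r - q) \<noteq> 0"
  shows "lattice_invariant v1 v2 \<le> \<bar>det2 (q - p) (r - q)\<bar>"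
proof -
  obtain m0 n0 m1 n1 m2 n2 where
    p: "p = v0 + of_int m0 *\<^sub>R v1 + of_int n0 *\<^sub>R v2" and
    q: "q = v0 + of_int m1 *\<^sub>R v1 + of_int n1 *\<^sub>R v2" and
    r: "r = v0 + of_int m2 *\<^sub>R v1 + of_int n2 *\<^sub>R v2"
    using assms(1-3) by (auto simp: lattice_def)
  define k where "k = (m1 - m0) * (n2 - n1) - (n1 - n0) * (m2 - m1)"
  have k: "det2 (q - p) (r - q) = of_int k * det2 v1 v2"
    unfolding p q r k_def det2_def by (simp add: algebra_simps)
  hence "1 \<le> \<bar>real_of_int k\<bar>"
    using nonzero by (auto simp del: of_int_abs)
  hence "1 * \<bar>det2 v1 v2\<bar> \<le> \<bar>real_of_int k\<bar> * \<bar>det2 v1 v2\<bar>"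
    by (intro mult_right_mono) auto
  thus ?thesis by (simp add: k lattice_invariant_def abs_mult)
qed

lemma finite_Int_lattice:
  assumes "bounded S" and nondegenerate: "det2 v1 v2 \<noteq> 0"
  shows "finite (S \<inter> lattice v0 v1 v2)"
proof -
  obtain B where B: "\<And>x. x \<in> S \<Longrightarrow> norm x \<le> B"
    using assms(1) bounded_iff by blast
  define M where "M = ceiling ((B + norm v0) * (norm v1 + norm v2) / \<bar>det2 v1 v2\<bar>)"
  have coefficient_bound: "\<bar>k\<bar> \<le> M"
    if "x \<in> S" "\<bar>of_int k * det2 v1 v2\<bar> \<le> norm (x - v0) * (norm v1 + norm v2)" for x k
  proof -
    have "norm (x - v0) \<le> B + norm v0"
      using B[OF \<open>x \<in> S\<close>] norm_triangle_ineq4[of x v0] by linarith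
    hence "\<bar>of_int k\<bar> * \<bar>det2 v1 v2\<bar> \<le> (B + norm v0) * (norm v1 + norm v2)"
      using that(2) by (simp add: abs_mult)
        (meson mult_right_mono add_nonneg_nonneg norm_ge_zero order_trans)
    hence "\<bar>of_int k\<bar> \<le> (B + norm v0) * (norm v1 + norm v2) / \<bar>det2 v1 v2\<bar>"
      using nondegenerate by (simp add: field_simps)
    thus ?thesis unfolding M_def by linarith
  qed
  let ?point = "\<lambda>(m::int, n::int). v0 + of_int m *\<^sub>R v1 + of_int n *\<^sub>R v2"
  have "S \<inter> lattice v0 v1 v2 \<subseteq> ?point ` ({-M..M} \<times> {-M..M})"
  proof
    fix x assume x: "x \<in> S \<inter> lattice v0 v1 v2"
    then obtain m n where xe: "x = v0 + of_int m *\<^sub>R v1 + of_int n *\<^sub>R v2"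
      by (auto simp: lattice_def)
    have coords: "det2 (x - v0) v2 = of_int m * det2 v1 v2"
                 "det2 v1 (x - v0) = of_int n * det2 v1 v2"
      unfolding xe by (simp_all add: det2_linear)
    have norms: "norm (x - v0) * norm v \<le> norm (x - v0) * (norm v1 + norm v2)"
      if "v \<in> {v1, v2}" for v
      using that by (intro mult_left_mono) auto
    have "\<bar>m\<bar> \<le> M"
      using coefficient_bound[of x m] x coords(1) abs_det2_le_norm_mult[of "x - v0" v2] norms[of v2]
      by auto
    moreover have "\<bar>n\<bar> \<le> M"
      using coefficient_bound[of x n] x coords(2) abs_det2_le_norm_mult[of v1 "x - v0"] norms[of v1]
      by (auto simp: mult.commute)
    ultimately show "x \<in> ?point ` ({-M..M} \<times> {-M..M})"
      using xe by (auto intro!: image_eqI[where x="(m, n)"])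
  qed
  thus ?thesis by (rule finite_subset) auto
qed

lemma has_integral_norm_bound_integral:
  fixes f :: "'n::euclidean_space \<Rightarrow> 'a::banach"
  assumes "(f has_integral I) X" "(g has_integral J) X" "\<And>x. x \<in> X \<Longrightarrow> norm (f x) \<le> g x"
  shows "norm I \<le> J"
  using integral_norm_bound_integral[of f X g] assms
  by (metis has_integral_integrable integral_unique)

lemma fundamental_theorem_of_calculus_subinterval:
  fixes F :: "real \<Rightarrow> 'a::banach"
  assumes "a \<le> s" "s \<le> u" "u \<le> b"
    and "\<And>t. t \<in> {a..b} \<Longrightarrow> (F has_vector_derivative f t) (at t within {a..b})"
  shows "(f has_integral (F u - F s)) {s..u}"
  using assms by (intro fundamental_theorem_of_calculus)
    (auto intro: has_vector_derivative_within_subset[of F _ _ "{a..b}"])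

lemma fundamental_theorem_of_calculus_subinterval_real:
  assumes "a \<le> s" "s \<le> u" "u \<le> b"
    and "\<And>t. t \<in> {a..b} \<Longrightarrow> (F has_real_derivative f t) (at t within {a..b})"
  shows "(f has_integral (F u - F s)) {s..u}"
  using assms by (intro fundamental_theorem_of_calculus_subinterval)
    (auto simp: has_real_derivative_iff_has_vector_derivative)

lemma has_vector_derivative_eq_0_if_locally_constant:
  fixes f :: "real \<Rightarrow> 'a::real_normed_vector"
  assumes "a < b" "s \<in> {a..b}" "\<delta> > 0"
    and "(f has_vector_derivative f') (at s within {a..b})"
    and locally_const: "\<And>t. t \<in> {a..b} \<Longrightarrow> \<bar>t - s\<bar> < \<delta> \<Longrightarrow> f t = c"
  shows "f' = 0"
proof -
  have "(f has_vector_derivative 0) (at s within {a..b})"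
    using has_vector_derivative_const[of c] assms(3,2)
    by (rule has_vector_derivative_transform_within) (use locally_const in \<open>auto simp: dist_real_def\<close>)
  thus ?thesis
    using vector_derivative_unique_within_closed_interval[of a b s f f' 0] assms by simp
qed

lemma has_real_derivative_norm:
  fixes g :: "real \<Rightarrow> 'a::real_inner"
  assumes "(g has_vector_derivative g') (at t within X)" "g t \<noteq> 0"
  shows "((\<lambda>t. norm (g t)) has_real_derivative (g t \<bullet> g') / norm (g t)) (at t within X)"
proof -
  have "((\<lambda>t. norm (g t)) has_derivative (\<lambda>h. (h *\<^sub>R g') \<bullet> sgn (g t))) (at t within X)"
    using has_derivative_norm[OF assms(2)] assms(1) unfolding has_vector_derivative_def
    by (intro has_derivative_compose[of g _ t X norm]) auto
  moreover have "(\<lambda>h. (h *\<^sub>R g') \<bullet> sgn (g t)) = (*) ((g t \<bullet> g') / norm (g t))"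
    by (rule ext) (simp add: sgn_div_norm inner_commute divide_inverse mult.commute mult.left_commute)
  ultimately show ?thesis unfolding has_field_derivative_def by simp
qed

lemma has_vector_derivative_sgn:
  fixes g :: "real \<Rightarrow> 'a::real_inner"
  assumes "(g has_vector_derivative g') (at t within X)" "g t \<noteq> 0"
  shows "((\<lambda>t. sgn (g t)) has_vector_derivative
           (1 / norm (g t)) *\<^sub>R g' - ((g t \<bullet> g') / norm (g t) ^ 3) *\<^sub>R g t) (at t within X)"
proof -
  have n: "norm (g t) \<noteq> 0" using assms(2) by auto
  have "((\<lambda>t. 1 / norm (g t)) has_real_derivative - ((g t \<bullet> g') / norm (g t)) / (norm (g t))\<^sup>2)
          (at t within X)"
    using DERIV_inverse_fun[OF has_real_derivative_norm[OF assms] n]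
    by (simp add: divide_inverse power2_eq_square)
  from has_vector_derivative_scaleR[OF this assms(1)]
  have "((\<lambda>t. (1 / norm (g t)) *\<^sub>R g t) has_vector_derivative
          (1 / norm (g t)) *\<^sub>R g' + (- ((g t \<bullet> g') / norm (g t)) / (norm (g t))\<^sup>2) *\<^sub>R g t) (at t within X)"
    by simp
  moreover have "(1 / norm (g t)) *\<^sub>R g' + (- ((g t \<bullet> g') / norm (g t)) / (norm (g t))\<^sup>2) *\<^sub>R g t
                   = (1 / norm (g t)) *\<^sub>R g' - ((g t \<bullet> g') / norm (g t) ^ 3) *\<^sub>R g t"
    using n by (simp add: field_simps power3_eq_cube power2_eq_square)
  moreover have "(\<lambda>t. sgn (g t)) = (\<lambda>t. (1 / norm (g t)) *\<^sub>R g t)"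
    by (simp add: sgn_div_norm fun_eq_iff divide_inverse)
  ultimately show ?thesis by metis
qed

lemma norm_sgn_derivative:
  assumes "g \<noteq> (0::real^2)"
  shows "norm ((1 / norm g) *\<^sub>R g' - ((g \<bullet> g') / norm g ^ 3) *\<^sub>R g) = \<bar>det2 g g'\<bar> / norm g ^ 2"
proof -
  let ?v = "(1 / norm g) *\<^sub>R g' - ((g \<bullet> g') / norm g ^ 3) *\<^sub>R g"
  have n: "norm g > 0" using assms by auto
  have gg: "g \<bullet> g = (norm g)\<^sup>2" and g'g': "g' \<bullet> g' = (norm g')\<^sup>2"
    by (simp_all add: power2_norm_eq_inner)
  have "?v \<bullet> ?v = (norm g')\<^sup>2 / (norm g)\<^sup>2 - (g \<bullet> g')\<^sup>2 / (norm g)^4"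
    using n
    by (simp add: inner_diff_left inner_diff_right gg g'g' inner_commute field_simps power2_eq_square
        power3_eq_cube)
       (simp add: algebra_simps power4_eq_xxxx)
  also have "\<dots> = (det2 g g')\<^sup>2 / (norm g)^4"
    using n det2_squared_plus_inner_squared[of g g']
    by (simp add: field_simps power2_eq_square power4_eq_xxxx)
  also have "\<dots> = (\<bar>det2 g g'\<bar> / norm g ^ 2)\<^sup>2"
    by (simp add: power_divide power4_eq_xxxx power2_eq_square)
  finally have "(norm ?v)\<^sup>2 = (\<bar>det2 g g'\<bar> / norm g ^ 2)\<^sup>2"
    by (simp only: power2_norm_eq_inner)
  thus ?thesis by (rule power2_eq_imp_eq) auto
qed

lemma cube_root_bound_by_sum:
  fixes A R \<alpha> \<beta> :: real
  assumes "A > 0" "R > 0" "\<alpha> \<ge> 0" "\<beta> \<ge> 0" and area: "A \<le> \<alpha> * \<beta> * (\<alpha> + \<beta>) / (2 * R)"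
  shows "2 * (A * R) powr (1/3) \<le> \<alpha> + \<beta>"
proof -
  have "4 * (\<alpha> * \<beta>) * (\<alpha> + \<beta>) \<le> (\<alpha> + \<beta>)\<^sup>2 * (\<alpha> + \<beta>)"
    using zero_le_square[of "\<alpha> - \<beta>"] assms(3,4)
    by (intro mult_right_mono) (auto simp: power2_eq_square algebra_simps)
  hence "8 * A * R \<le> (\<alpha> + \<beta>) ^ 3"
    using area \<open>R > 0\<close> by (simp add: field_simps power2_eq_square power3_eq_cube)
  moreover have "(2 * (A * R) powr (1/3)) ^ 3 = 8 * A * R"
    using assms(1,2) by (simp add: power_mult_distrib powr_realpow[symmetric] powr_powr)
  ultimately have "(2 * (A * R) powr (1/3)) ^ Suc 2 \<le> (\<alpha> + \<beta>) ^ Suc 2"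
    by (simp add: numeral_3_eq_3)
  thus ?thesis by (rule power_le_imp_le_base) (use assms(3,4) in simp)
qed

section \<open>Counting\<close>

lemma two_largest_elements:
  fixes F :: "'a::linorder set"
  assumes "finite F" "card F \<ge> 3"
  obtains u m where "u \<in> F" "m \<in> F" "m < u" "\<And>x. x \<in> F - {u, m} \<Longrightarrow> x < m"
    and "u = Max F" "card (F - {u, m}) = card F - 2"
proof -
  define u where "u = Max F"
  define m where "m = Max (F - {u})"
  have "F \<noteq> {}" using assms(2) by auto
  hence "u \<in> F" using assms(1) by (simp add: u_def)
  hence "card (F - {u}) \<ge> 2" using assms by simp
  hence "F - {u} \<noteq> {}" by (metis card.empty not_numeral_le_zero)
  hence "m \<in> F - {u}" unfolding m_def using assms(1) by (intro Max_in) auto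
  hence "m < u" using Max_ge[OF assms(1), of m] by (auto simp: u_def)
  have "x < m" if "x \<in> F - {u, m}" for x
  proof -
    have "x \<le> m" unfolding m_def using that assms(1) by (intro Max_ge) auto
    thus ?thesis using that by auto
  qed
  moreover have "F - {u, m} = F - {u} - {m}" by blast
  hence "card (F - {u, m}) = card F - 2"
    using \<open>u \<in> F\<close> \<open>m \<in> F - {u}\<close> assms(1) by simp
  ultimately show thesis
    using that \<open>u \<in> F\<close> \<open>m \<in> F - {u}\<close> \<open>m < u\<close> u_def by blast
qed

lemma card_bound_by_triple_spread:
  fixes G :: "real set" and S :: "real \<Rightarrow> real"
  assumes "finite G" "G \<noteq> {}" "c > 0"
    and strict: "\<And>x y. x \<in> G \<Longrightarrow> y \<in> G \<Longrightarrow> x < y \<Longrightarrow> S x < S y"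
    and spread: "\<And>x y z. x \<in> G \<Longrightarrow> y \<in> G \<Longrightarrow> z \<in> G \<Longrightarrow> x < y \<Longrightarrow> y < z \<Longrightarrow> 2 * c \<le> S z - S x"
  shows "c * (real (card G) - 2) < S (Max G) - S (Min G)"
proof -
  have "c * (real (card F) - 2) < S (Max F) - S (Min F)" if "F \<subseteq> G" "F \<noteq> {}" for F
    using that
  proof (induction "card F" arbitrary: F rule: less_induct)
    case less
    have "finite F" using less.prems(1) assms(1) by (rule finite_subset)
    consider "card F = 1" | "card F = 2" | "card F \<ge> 3"
      using \<open>finite F\<close> less.prems(2) card_0_eq[of F] by linarith
    thus ?case
    proof cases
      case 1
      thus ?thesis using \<open>c > 0\<close> by (auto simp: card_1_singleton_iff)
    next
      case 2
      then obtain x y where xy: "F = {x, y}" "x \<noteq> y" by (auto simp: card_2_iff)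
      hence "x \<in> G" "y \<in> G" using less.prems(1) by auto
      thus ?thesis using strict[of x y] strict[of y x] xy by (cases "x < y") auto
    next
      case 3
      then obtain u m where um: "u \<in> F" "m \<in> F" "m < u" "\<And>x. x \<in> F - {u, m} \<Longrightarrow> x < m"
        and "u = Max F" "card (F - {u, m}) = card F - 2"
        using two_largest_elements[OF \<open>finite F\<close>] by metis
      define F' where "F' = F - {u, m}"
      have "card F' = card F - 2" using \<open>card (F - {u, m}) = card F - 2\<close> by (simp add: F'_def)
      hence "F' \<noteq> {}" "card F' < card F" using 3 by auto
      have "F' \<subseteq> G" using less.prems(1) by (auto simp: F'_def)
      have "finite F'" using \<open>finite F\<close> by (simp add: F'_def)
      have "Max F' \<in> F" "Max F' < m"
        using Max_in[OF \<open>finite F'\<close> \<open>F' \<noteq> {}\<close>] um(4) by (auto simp: F'_def)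
      have "c * (real (card F') - 2) < S (Max F') - S (Min F')"
        using less.hyps \<open>card F' < card F\<close> \<open>F' \<subseteq> G\<close> \<open>F' \<noteq> {}\<close> by blast
      moreover have "2 * c \<le> S u - S (Max F')"
        using spread \<open>Max F' \<in> F\<close> \<open>Max F' < m\<close> um(1-3) less.prems(1) by blast
      moreover have "S (Min F) \<le> S (Min F')"
      proof -
        have "Min F \<le> Min F'"
          using Min_antimono[of F' F] \<open>F' \<noteq> {}\<close> \<open>finite F\<close> by (auto simp: F'_def)
        moreover have "Min F \<in> G" "Min F' \<in> G"
          using Min_in \<open>finite F\<close> \<open>finite F'\<close> less.prems \<open>F' \<noteq> {}\<close> \<open>F' \<subseteq> G\<close> by blast+
        ultimately show ?thesis using strict[of "Min F" "Min F'"] by (cases "Min F = Min F'") auto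
      qed
      moreover have "real (card F) = real (card F') + 2"
        using \<open>card F' = card F - 2\<close> 3 by simp
      ultimately show ?thesis using \<open>u = Max F\<close> by (simp add: algebra_simps)
    qed
  qed
  from this[OF order_refl assms(2)] show ?thesis .
qed

section \<open>Curves whose radius of curvature is bounded below\<close>

locale radius_of_curvature_ge =
  fixes \<gamma> g1 g2 :: "real \<Rightarrow> real^2" and a b R :: real
  assumes curve: "C2_pos_curve \<gamma> g1 g2 a b"
    and R_pos: "R > 0"
    and radius_ge: "\<forall>t\<in>{a..b}. 1 / curvature g1 g2 t \<ge> R"
begin

definition arclength :: "real \<Rightarrow> real" where
  "arclength t = integral {a..t} (\<lambda>t. norm (g1 t))"

lemma a_less_b: "a < b"
  using curve by (simp add: C2_pos_curve_def)

lemma curve_has_derivative: "t \<in> {a..b} \<Longrightarrow> (\<gamma> has_vector_derivative g1 t) (at t within {a..b})"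
  using curve by (simp add: C2_pos_curve_def)

lemma tangent_has_derivative: "t \<in> {a..b} \<Longrightarrow> (g1 has_vector_derivative g2 t) (at t within {a..b})"
  using curve by (simp add: C2_pos_curve_def)

lemma tangent_nonzero: "t \<in> {a..b} \<Longrightarrow> g1 t \<noteq> 0"
  using curve by (simp add: C2_pos_curve_def)

lemma det2_tangent_pos: "t \<in> {a..b} \<Longrightarrow> det2 (g1 t) (g2 t) > 0"
  using curve by (simp add: C2_pos_curve_def)

lemma continuous_on_curve: "continuous_on {a..b} \<gamma>"
  using curve_has_derivative has_vector_derivative_continuous continuous_on_eq_continuous_within
  by blast

lemma continuous_on_tangent: "continuous_on {a..b} g1"
  using tangent_has_derivative has_vector_derivative_continuous continuous_on_eq_continuous_within
  by blast

lemma continuous_on_norm_tangent: "continuous_on {a..b} (\<lambda>t. norm (g1 t))"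
  using continuous_on_tangent by (intro continuous_intros)

lemma det2_tangent_le:
  assumes t: "t \<in> {a..b}"
  shows "det2 (g1 t) (g2 t) \<le> norm (g1 t) ^ 3 / R"
proof -
  have n: "norm (g1 t) > 0" using tangent_nonzero[OF t] by simp
  hence \<kappa>: "curvature g1 g2 t > 0" using det2_tangent_pos[OF t] by (simp add: curvature_def)
  have "R \<le> 1 / curvature g1 g2 t" using radius_ge t by blast
  hence "R * curvature g1 g2 t \<le> 1" using \<kappa> by (simp add: field_simps)
  hence "det2 (g1 t) (g2 t) * R \<le> norm (g1 t) ^ 3" using n by (simp add: curvature_def field_simps)
  thus ?thesis using R_pos by (simp add: field_simps)
qed

lemma arclength_has_real_derivative:
  "t \<in> {a..b} \<Longrightarrow> (arclength has_real_derivative norm (g1 t)) (at t within {a..b})"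
  unfolding arclength_def[abs_def] by (rule integral_has_real_derivative[OF continuous_on_norm_tangent])

lemma arclength_has_integral:
  "a \<le> s \<Longrightarrow> s \<le> u \<Longrightarrow> u \<le> b \<Longrightarrow>
     ((\<lambda>t. norm (g1 t)) has_integral arclength u - arclength s) {s..u}"
  by (rule fundamental_theorem_of_calculus_subinterval_real[OF _ _ _ arclength_has_real_derivative])

lemma arclength_mono: "a \<le> s \<Longrightarrow> s \<le> u \<Longrightarrow> u \<le> b \<Longrightarrow> arclength s \<le> arclength u"
  using has_integral_nonneg[OF arclength_has_integral] by fastforce

lemma arclength_a [simp]: "arclength a = 0"
  by (simp add: arclength_def)

lemma norm_diff_sgn_tangent_le:
  assumes "a \<le> s" "s \<le> u" "u \<le> b"
  shows "norm (sgn (g1 u) - sgn (g1 s)) \<le> (arclength u - arclength s) / R"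
proof -
  define T' where "T' t = (1 / norm (g1 t)) *\<^sub>R g2 t - ((g1 t \<bullet> g2 t) / norm (g1 t) ^ 3) *\<^sub>R g1 t"
    for t
  have "(T' has_integral (sgn (g1 u) - sgn (g1 s))) {s..u}"
    using assms unfolding T'_def
    by (intro fundamental_theorem_of_calculus_subinterval[of a s u b "\<lambda>t. sgn (g1 t)"]
        has_vector_derivative_sgn tangent_has_derivative tangent_nonzero)
  moreover have "((\<lambda>t. norm (g1 t) / R) has_integral (arclength u - arclength s) / R) {s..u}"
    using assms by (intro has_integral_divide arclength_has_integral)
  moreover have "norm (T' t) \<le> norm (g1 t) / R" if "t \<in> {s..u}" for t
  proof -
    have t: "t \<in> {a..b}" using that assms by auto
    have n: "norm (g1 t) > 0" using tangent_nonzero[OF t] by auto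
    have "norm (T' t) = \<bar>det2 (g1 t) (g2 t)\<bar> / norm (g1 t) ^ 2"
      unfolding T'_def by (rule norm_sgn_derivative[OF tangent_nonzero[OF t]])
    also have "\<dots> \<le> (norm (g1 t) ^ 3 / R) / norm (g1 t) ^ 2"
      using det2_tangent_le[OF t] det2_tangent_pos[OF t] by (intro divide_right_mono) auto
    also have "\<dots> = norm (g1 t) / R"
      using n by (simp add: field_simps power3_eq_cube power2_eq_square)
    finally show ?thesis .
  qed
  ultimately show ?thesis by (rule has_integral_norm_bound_integral)
qed

lemma abs_det2_tangents_le:
  assumes "s \<in> {a..b}" "u \<in> {a..b}"
  shows "\<bar>det2 (g1 s) (g1 u)\<bar> \<le> norm (g1 s) * norm (g1 u) * \<bar>arclength u - arclength s\<bar> / R"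
proof -
  have turn: "norm (sgn (g1 u) - sgn (g1 s)) \<le> \<bar>arclength u - arclength s\<bar> / R"
  proof (cases "s \<le> u")
    case True
    hence "\<bar>arclength u - arclength s\<bar> = arclength u - arclength s"
      using arclength_mono[of s u] assms by simp
    thus ?thesis using norm_diff_sgn_tangent_le[of s u] True assms by simp
  next
    case False
    hence "\<bar>arclength u - arclength s\<bar> = arclength s - arclength u"
      using arclength_mono[of u s] assms by simp
    thus ?thesis using norm_diff_sgn_tangent_le[of u s] False assms by (simp add: norm_minus_commute)
  qed
  have "\<bar>det2 (sgn (g1 s)) (sgn (g1 u))\<bar> = \<bar>det2 (sgn (g1 s)) (sgn (g1 u) - sgn (g1 s))\<bar>"
    by (simp add: det2_diff_right)
  also have "\<dots> \<le> norm (sgn (g1 u) - sgn (g1 s))"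
    using abs_det2_le_norm_mult[of "sgn (g1 s)" "sgn (g1 u) - sgn (g1 s)"] tangent_nonzero[OF assms(1)]
    by (simp add: norm_sgn)
  finally have "\<bar>det2 (sgn (g1 s)) (sgn (g1 u))\<bar> \<le> \<bar>arclength u - arclength s\<bar> / R"
    using turn by linarith
  hence "norm (g1 s) * norm (g1 u) * \<bar>det2 (sgn (g1 s)) (sgn (g1 u))\<bar>
           \<le> norm (g1 s) * norm (g1 u) * (\<bar>arclength u - arclength s\<bar> / R)"
    by (intro mult_left_mono) auto
  thus ?thesis by (simp add: det2_sgn[of "g1 s"] abs_mult)
qed

lemma abs_det2_tangent_chord_le:
  assumes "a \<le> x" "x \<le> m" "m \<le> t2" "t2 \<le> b"
  defines "\<beta> \<equiv> arclength t2 - arclength m"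
  shows "\<bar>det2 (g1 x) (\<gamma> t2 - \<gamma> m)\<bar> \<le> norm (g1 x) / R * (\<beta>\<^sup>2 / 2 + (arclength m - arclength x) * \<beta>)"
proof -
  let ?S = arclength and ?N = "norm (g1 x) / R"
  have "((\<lambda>y. det2 (g1 x) (g1 y)) has_integral det2 (g1 x) (\<gamma> t2 - \<gamma> m)) {m..t2}"
    unfolding det2_diff_right using assms
    by (intro fundamental_theorem_of_calculus_subinterval[of a m t2 b "\<lambda>y. det2 (g1 x) (\<gamma> y)"])
       (auto intro: bounded_linear.has_vector_derivative[OF bounded_linear_det2_right curve_has_derivative])
  moreover have "((\<lambda>y. ?N * ((?S y - ?S x) * norm (g1 y))) has_integral
      ?N * (?S t2 - ?S x)\<^sup>2 / 2 - ?N * (?S m - ?S x)\<^sup>2 / 2) {m..t2}"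
    using assms R_pos
    by (intro fundamental_theorem_of_calculus_subinterval_real[of a m t2 b "\<lambda>y. ?N * (?S y - ?S x)\<^sup>2 / 2"])
       (auto intro!: derivative_eq_intros arclength_has_real_derivative simp: field_simps)
  moreover have "norm (det2 (g1 x) (g1 y)) \<le> ?N * ((?S y - ?S x) * norm (g1 y))"
    if "y \<in> {m..t2}" for y
    using abs_det2_tangents_le[of x y] arclength_mono[of x y] that assms R_pos
    by (simp add: field_simps)
  ultimately have "norm (det2 (g1 x) (\<gamma> t2 - \<gamma> m))
      \<le> ?N * (?S t2 - ?S x)\<^sup>2 / 2 - ?N * (?S m - ?S x)\<^sup>2 / 2"
    by (rule has_integral_norm_bound_integral)
  also have "\<dots> = ?N * (\<beta>\<^sup>2 / 2 + (?S m - ?S x) * \<beta>)"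
    unfolding \<beta>_def using R_pos by (simp add: field_simps power2_eq_square)
  finally show ?thesis by simp
qed

lemma abs_det2_chords_le:
  assumes "a \<le> t0" "t0 \<le> m" "m \<le> t2" "t2 \<le> b"
  defines "\<alpha> \<equiv> arclength m - arclength t0" and "\<beta> \<equiv> arclength t2 - arclength m"
  shows "\<bar>det2 (\<gamma> m - \<gamma> t0) (\<gamma> t2 - \<gamma> m)\<bar> \<le> \<alpha> * \<beta> * (\<alpha> + \<beta>) / (2 * R)"
proof -
  let ?S = arclength
  have "((\<lambda>x. det2 (g1 x) (\<gamma> t2 - \<gamma> m)) has_integral det2 (\<gamma> m - \<gamma> t0) (\<gamma> t2 - \<gamma> m)) {t0..m}"
    unfolding det2_diff_left using assms
    by (intro fundamental_theorem_of_calculus_subinterval[of a t0 m b "\<lambda>y. det2 (\<gamma> y) (\<gamma> t2 - \<gamma> m)"])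
       (auto intro: bounded_linear.has_vector_derivative[OF bounded_linear_det2_left curve_has_derivative])
  moreover have "((\<lambda>x. norm (g1 x) / R * (\<beta>\<^sup>2 / 2 + (?S m - ?S x) * \<beta>)) has_integral
     ((\<beta>\<^sup>2/2 * ?S m - \<beta> * (?S m - ?S m)\<^sup>2/2) / R - (\<beta>\<^sup>2/2 * ?S t0 - \<beta> * (?S m - ?S t0)\<^sup>2/2) / R)) {t0..m}"
    using assms R_pos
    by (intro fundamental_theorem_of_calculus_subinterval_real[of a t0 m b "\<lambda>x. (\<beta>\<^sup>2/2 * ?S x - \<beta> * (?S m - ?S x)\<^sup>2/2) / R"])
       (auto intro!: derivative_eq_intros arclength_has_real_derivative simp: field_simps)
  moreover have "norm (det2 (g1 x) (\<gamma> t2 - \<gamma> m)) \<le> norm (g1 x) / R * (\<beta>\<^sup>2 / 2 + (?S m - ?S x) * \<beta>)"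
    if "x \<in> {t0..m}" for x
    using abs_det2_tangent_chord_le[of x m t2] that assms by simp
  ultimately have "norm (det2 (\<gamma> m - \<gamma> t0) (\<gamma> t2 - \<gamma> m)) \<le>
     (\<beta>\<^sup>2/2 * ?S m - \<beta> * (?S m - ?S m)\<^sup>2/2) / R - (\<beta>\<^sup>2/2 * ?S t0 - \<beta> * (?S m - ?S t0)\<^sup>2/2) / R"
    by (rule has_integral_norm_bound_integral)
  also have "\<dots> = \<alpha> * \<beta> * (\<alpha> + \<beta>) / (2 * R)"
    unfolding \<alpha>_def using R_pos by (simp add: field_simps power2_eq_square)
  finally show ?thesis by simp
qed

lemma curve_not_locally_in_line:
  assumes s: "s \<in> {a..b}" and "\<delta> > 0" "n \<noteq> 0"
    and line: "\<And>t. t \<in> {a..b} \<Longrightarrow> \<bar>t - s\<bar> < \<delta> \<Longrightarrow> n \<bullet> \<gamma> t = c"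
  shows False
proof -
  have \<delta>: "\<delta> / 2 > 0" using \<open>\<delta> > 0\<close> by simp
  have normal_tangent: "n \<bullet> g1 t = 0" if t: "t \<in> {a..b}" "\<bar>t - s\<bar> < \<delta> / 2" for t
  proof -
    have "((\<lambda>t. n \<bullet> \<gamma> t) has_vector_derivative n \<bullet> g1 t) (at t within {a..b})"
      by (rule bounded_linear.has_vector_derivative[OF bounded_linear_inner_right curve_has_derivative[OF t(1)]])
    moreover have "n \<bullet> \<gamma> t' = c" if "t' \<in> {a..b}" "\<bar>t' - t\<bar> < \<delta> / 2" for t'
      using line[OF that(1)] that(2) t(2) by linarith
    ultimately show ?thesis
      by (rule has_vector_derivative_eq_0_if_locally_constant[OF a_less_b t(1) \<delta>])
  qed
  have "((\<lambda>t. n \<bullet> g1 t) has_vector_derivative n \<bullet> g2 s) (at s within {a..b})"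
    by (rule bounded_linear.has_vector_derivative[OF bounded_linear_inner_right tangent_has_derivative[OF s]])
  hence "n \<bullet> g2 s = 0"
    by (rule has_vector_derivative_eq_0_if_locally_constant[OF a_less_b s \<delta>]) (rule normal_tangent)
  hence "det2 (g1 s) (g2 s) = 0"
    using det2_eq_0_if_orthogonal[OF \<open>n \<noteq> 0\<close>] normal_tangent[OF s] \<open>\<delta> > 0\<close> by simp
  thus False using det2_tangent_pos[OF s] by simp
qed

end

section \<open>Convex arcs\<close>

lemma supporting_line_through_open_segment:
  assumes "q \<in> open_segment p r" "n \<bullet> q \<le> n \<bullet> p" "n \<bullet> q \<le> n \<bullet> r"
  shows "n \<bullet> p = n \<bullet> q" "n \<bullet> r = n \<bullet> q"
proof -
  obtain u where u: "0 < u" "u < 1" "q = (1 - u) *\<^sub>R p + u *\<^sub>R r"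
    using assms(1) by (auto simp: in_segment)
  have "n \<bullet> q = (1 - u) * (n \<bullet> p) + u * (n \<bullet> r)"
    using u(3) by (simp add: inner_add_right)
  hence "(1 - u) * (n \<bullet> p - n \<bullet> q) + u * (n \<bullet> r - n \<bullet> q) = 0"
    by (simp add: algebra_simps)
  moreover have "(1 - u) * (n \<bullet> p - n \<bullet> q) \<ge> 0" "u * (n \<bullet> r - n \<bullet> q) \<ge> 0"
    using assms(2,3) u by auto
  ultimately have "(1 - u) * (n \<bullet> p - n \<bullet> q) = 0" "u * (n \<bullet> r - n \<bullet> q) = 0"
    by linarith+
  thus "n \<bullet> p = n \<bullet> q" "n \<bullet> r = n \<bullet> q" using u by auto
qed

lemma line_points_near_open_segment:
  fixes p q r n :: "real^2"
  assumes q: "q \<in> open_segment p r" and "n \<noteq> 0" and "n \<bullet> p = n \<bullet> r"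
  obtains e where "e > 0" "\<And>w. n \<bullet> w = n \<bullet> q \<Longrightarrow> dist w q < e \<Longrightarrow> w \<in> closed_segment p r"
proof -
  obtain u where u: "0 < u" "u < 1" "q = (1 - u) *\<^sub>R p + u *\<^sub>R r" and "p \<noteq> r"
    using q by (auto simp: in_segment)
  show thesis
  proof (rule that)
    show "min u (1 - u) * norm (r - p) > 0"
      using u \<open>p \<noteq> r\<close> by simp
    fix w assume w: "n \<bullet> w = n \<bullet> q" "dist w q < min u (1 - u) * norm (r - p)"
    have "det2 (r - p) (w - q) = 0"
      using det2_eq_0_if_orthogonal[OF \<open>n \<noteq> 0\<close>] assms(3) w(1) by (simp add: inner_diff_right)
    then obtain \<tau> where \<tau>: "w - q = \<tau> *\<^sub>R (r - p)"
      using det2_eq_0_imp_scaleR \<open>p \<noteq> r\<close> by (metis eq_iff_diff_eq_0)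
    have "\<bar>\<tau>\<bar> * norm (r - p) < min u (1 - u) * norm (r - p)"
      using w(2) \<tau> by (simp add: dist_norm)
    hence "\<bar>\<tau>\<bar> < min u (1 - u)"
      using \<open>p \<noteq> r\<close> by (simp add: mult_less_cancel_right)
    moreover have "w = (1 - (u + \<tau>)) *\<^sub>R p + (u + \<tau>) *\<^sub>R r"
      using \<tau> u(3) by (simp add: algebra_simps)
    ultimately show "w \<in> closed_segment p r"
      by (auto simp: in_segment intro!: exI[of _ "u + \<tau>"])
  qed
qed

text \<open>Such an \<open>x\<close> lies on the open segment from the interior point \<open>z\<close> to the central
  projection \<open>W x\<close> of \<open>x\<close> from \<open>z\<close> onto the line, and \<open>W x\<close> stays in \<open>[p, r]\<close> for \<open>x\<close>
  near \<open>q\<close>.\<close>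

lemma interior_near_supporting_line:
  fixes K :: "(real^2) set"
  assumes K: "convex K" and z: "z \<in> interior K" and p: "p \<in> closure K" and r: "r \<in> closure K"
    and q: "q \<in> open_segment p r" and "n \<noteq> 0"
    and np: "n \<bullet> p = n \<bullet> q" and nr: "n \<bullet> r = n \<bullet> q" and nz: "n \<bullet> q < n \<bullet> z"
  obtains \<rho> where "\<rho> > 0" "\<And>x. dist x q < \<rho> \<Longrightarrow> n \<bullet> q < n \<bullet> x \<Longrightarrow> x \<in> interior K"
proof -
  define h where "h = n \<bullet> z - n \<bullet> q"
  have "h > 0" using nz by (simp add: h_def)
  define \<theta> where "\<theta> x = (n \<bullet> x - n \<bullet> q) / h" for x
  define W where "W x = (1 / (1 - \<theta> x)) *\<^sub>R (x - \<theta> x *\<^sub>R z)" for x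
  obtain e where e: "e > 0" "\<And>w. n \<bullet> w = n \<bullet> q \<Longrightarrow> dist w q < e \<Longrightarrow> w \<in> closed_segment p r"
    using line_points_near_open_segment[OF q \<open>n \<noteq> 0\<close>] np nr by metis
  have \<theta>q: "\<theta> q = 0" by (simp add: \<theta>_def)
  have cont_\<theta>: "continuous (at q) \<theta>"
    unfolding \<theta>_def[abs_def] using \<open>h > 0\<close> by (intro continuous_intros) auto
  have "continuous (at q) W"
    unfolding W_def[abs_def] using cont_\<theta> \<theta>q by (intro continuous_intros) auto
  moreover have "W q = q" by (simp add: W_def \<theta>q)
  ultimately obtain \<rho>2 where \<rho>2: "\<rho>2 > 0" "\<And>x. dist x q < \<rho>2 \<Longrightarrow> dist (W x) q < e"
    using e(1) unfolding continuous_at_eps_delta by metis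
  obtain \<rho>1 where \<rho>1: "\<rho>1 > 0" "\<And>x. dist x q < \<rho>1 \<Longrightarrow> dist (\<theta> x) (\<theta> q) < 1"
    using cont_\<theta> unfolding continuous_at_eps_delta by (meson zero_less_one)
  show thesis
  proof (rule that[of "min \<rho>1 \<rho>2"])
    show "min \<rho>1 \<rho>2 > 0" using \<rho>1 \<rho>2 by auto
    fix x assume x: "dist x q < min \<rho>1 \<rho>2" "n \<bullet> q < n \<bullet> x"
    have \<theta>: "0 < \<theta> x" "\<theta> x < 1"
      using \<rho>1(2)[of x] x \<open>h > 0\<close> by (auto simp: \<theta>q \<theta>_def dist_real_def)
    have "(1 - \<theta> x) * (n \<bullet> W x) = n \<bullet> x - \<theta> x * (n \<bullet> z)"
      using \<theta> by (simp add: W_def inner_diff_right)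
    also have "\<dots> = (1 - \<theta> x) * (n \<bullet> q)"
      using \<open>h > 0\<close> by (simp add: \<theta>_def h_def field_simps)
    finally have "n \<bullet> W x = n \<bullet> q" using \<theta> by simp
    hence "W x \<in> closure K"
      using e(2) \<rho>2(2)[of x] x(1) closed_segment_subset[OF p r convex_closure[OF K]] by auto
    moreover have "(1 - \<theta> x) *\<^sub>R W x = x - \<theta> x *\<^sub>R z"
      using \<theta> by (simp add: W_def)
    hence "x = (1 - (1 - \<theta> x)) *\<^sub>R z + (1 - \<theta> x) *\<^sub>R W x"
      by (simp add: algebra_simps)
    hence "x \<in> open_segment z (W x)"
      using \<theta> \<open>n \<bullet> W x = n \<bullet> q\<close> nz unfolding in_segment by (intro conjI exI[of _ "1 - \<theta> x"]) auto
    ultimately show "x \<in> interior K"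
      using in_interior_closure_convex_segment[OF K z] by blast
  qed
qed

locale convex_arc = radius_of_curvature_ge +
  fixes K :: "(real^2) set"
  assumes convex: "convex K" and interior_nonempty: "interior K \<noteq> {}"
    and on_frontier: "\<gamma> ` {a..b} \<subseteq> frontier K" and injective: "inj_on \<gamma> {a..b}"
begin

text \<open>Otherwise the supporting line at the middle point would contain a whole piece of the curve.\<close>

lemma curve_point_not_in_open_segment:
  assumes s: "s1 \<in> {a..b}" "s2 \<in> {a..b}" "s3 \<in> {a..b}"
  shows "\<gamma> s2 \<notin> open_segment (\<gamma> s1) (\<gamma> s3)"
proof
  assume q: "\<gamma> s2 \<in> open_segment (\<gamma> s1) (\<gamma> s3)"
  have frontier: "\<gamma> t \<in> closure K" "\<gamma> t \<notin> interior K" if "t \<in> {a..b}" for t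
    using on_frontier that unfolding frontier_def by blast+
  obtain n where "n \<noteq> 0" and supp: "\<And>y. y \<in> closure K \<Longrightarrow> n \<bullet> \<gamma> s2 \<le> n \<bullet> y"
    and supp_interior: "\<And>y. y \<in> interior K \<Longrightarrow> n \<bullet> \<gamma> s2 < n \<bullet> y"
    using supporting_hyperplane_relative_frontier[OF convex frontier(1)[OF s(2)]] frontier(2)[OF s(2)]
      rel_interior_nonempty_interior[OF interior_nonempty] by metis
  note line =
    supporting_line_through_open_segment[OF q supp supp, OF frontier(1) frontier(1), OF s(1) s(3)]
  obtain z where z: "z \<in> interior K" using interior_nonempty by auto
  obtain \<rho> where "\<rho> > 0" and \<rho>: "\<And>x. dist x (\<gamma> s2) < \<rho> \<Longrightarrow> n \<bullet> \<gamma> s2 < n \<bullet> x \<Longrightarrow> x \<in> interior K"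
    using interior_near_supporting_line[OF convex z frontier(1)[OF s(1)] frontier(1)[OF s(3)] q \<open>n \<noteq> 0\<close>
      line supp_interior[OF z]] by metis
  obtain \<delta> where "\<delta> > 0" and \<delta>: "\<And>t. t \<in> {a..b} \<Longrightarrow> dist t s2 < \<delta> \<Longrightarrow> dist (\<gamma> t) (\<gamma> s2) < \<rho>"
    using continuous_on_curve s(2) \<open>\<rho> > 0\<close> unfolding continuous_on_iff by metis
  have "n \<bullet> \<gamma> t = n \<bullet> \<gamma> s2" if "t \<in> {a..b}" "\<bar>t - s2\<bar> < \<delta>" for t
    using \<rho>[OF \<delta>[OF that(1)]] that frontier[OF that(1)] supp[OF frontier(1)[OF that(1)]]
    by (force simp: dist_real_def)
  thus False using curve_not_locally_in_line[OF s(2) \<open>\<delta> > 0\<close> \<open>n \<noteq> 0\<close>] by blast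
qed

lemma det2_chords_nonzero:
  assumes "a \<le> t0" "t0 < m" "m < t2" "t2 \<le> b"
  shows "det2 (\<gamma> m - \<gamma> t0) (\<gamma> t2 - \<gamma> m) \<noteq> 0"
proof
  assume "det2 (\<gamma> m - \<gamma> t0) (\<gamma> t2 - \<gamma> m) = 0"
  hence "collinear {\<gamma> t0, \<gamma> m, \<gamma> t2}" by (rule collinear_if_det2_eq_0)
  moreover have params: "t0 \<in> {a..b}" "m \<in> {a..b}" "t2 \<in> {a..b}" using assms by auto
  moreover have "\<gamma> t0 \<noteq> \<gamma> m" "\<gamma> m \<noteq> \<gamma> t2" "\<gamma> t0 \<noteq> \<gamma> t2"
    using injective params assms by (auto dest: inj_onD)
  ultimately show False
    using curve_point_not_in_open_segment[of t0 m t2] curve_point_not_in_open_segment[of m t0 t2]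
      curve_point_not_in_open_segment[of t0 t2 m]
    by (auto simp: collinear_between_cases between_mem_segment open_segment_def segment_convex_hull
        insert_commute)
qed

lemma arclength_strict_mono:
  assumes "a \<le> s" "s < u" "u \<le> b"
  shows "arclength s < arclength u"
proof -
  have "(g1 has_integral (\<gamma> u - \<gamma> s)) {s..u}"
    using assms curve_has_derivative by (intro fundamental_theorem_of_calculus_subinterval) auto
  hence "norm (\<gamma> u - \<gamma> s) \<le> arclength u - arclength s"
    using assms by (intro has_integral_norm_bound_integral[OF _ arclength_has_integral]) auto
  moreover have "\<gamma> u \<noteq> \<gamma> s" using injective assms by (auto dest: inj_onD)
  hence "norm (\<gamma> u - \<gamma> s) > 0" by simp
  ultimately show ?thesis by linarith
qed

lemma arclength_ge_of_lattice_triple: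
  assumes t: "a \<le> t0" "t0 < m" "m < t2" "t2 \<le> b" and "det2 v1 v2 \<noteq> 0"
    and "\<gamma> t0 \<in> lattice v0 v1 v2" "\<gamma> m \<in> lattice v0 v1 v2" "\<gamma> t2 \<in> lattice v0 v1 v2"
  shows "2 * (lattice_invariant v1 v2 * R) powr (1/3) \<le> arclength t2 - arclength t0"
proof -
  let ?\<alpha> = "arclength m - arclength t0" and ?\<beta> = "arclength t2 - arclength m"
  have "lattice_invariant v1 v2 \<le> \<bar>det2 (\<gamma> m - \<gamma> t0) (\<gamma> t2 - \<gamma> m)\<bar>"
    using lattice_invariant_le_abs_det2 det2_chords_nonzero[OF t] assms(6-8) by blast
  also have "\<dots> \<le> ?\<alpha> * ?\<beta> * (?\<alpha> + ?\<beta>) / (2 * R)"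
    using abs_det2_chords_le[of t0 m t2] t by simp
  finally have "2 * (lattice_invariant v1 v2 * R) powr (1/3) \<le> ?\<alpha> + ?\<beta>"
    using arclength_mono[of t0 m] arclength_mono[of m t2] t R_pos \<open>det2 v1 v2 \<noteq> 0\<close>
    by (intro cube_root_bound_by_sum) (auto simp: lattice_invariant_def)
  thus ?thesis by simp
qed

lemma card_lattice_points_less:
  assumes nondegenerate: "det2 v1 v2 \<noteq> 0"
  shows "finite (\<gamma> ` {a..b} \<inter> lattice v0 v1 v2)"
    and "real (card (\<gamma> ` {a..b} \<inter> lattice v0 v1 v2))
           < 2 + arclength b / (lattice_invariant v1 v2 * R) powr (1/3)"
proof -
  define c where "c = (lattice_invariant v1 v2 * R) powr (1/3)"
  have "c > 0" using nondegenerate R_pos by (simp add: c_def lattice_invariant_def)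
  define F where "F = {t \<in> {a..b}. \<gamma> t \<in> lattice v0 v1 v2}"
  have image: "\<gamma> ` F = \<gamma> ` {a..b} \<inter> lattice v0 v1 v2" by (auto simp: F_def)
  have "bounded (\<gamma> ` {a..b})"
    using compact_continuous_image[OF continuous_on_curve compact_Icc] by (rule compact_imp_bounded)
  thus finite: "finite (\<gamma> ` {a..b} \<inter> lattice v0 v1 v2)"
    by (rule finite_Int_lattice[OF _ nondegenerate])
  have inj: "inj_on \<gamma> F" using injective by (rule inj_on_subset) (auto simp: F_def)
  have "finite (\<gamma> ` F)" using finite by (simp only: image)
  hence "finite F" using inj by (rule finite_imageD)
  have card: "card (\<gamma> ` {a..b} \<inter> lattice v0 v1 v2) = card F"
    using card_image[OF inj] by (simp only: image)
  have "0 \<le> arclength b" using arclength_mono[of a b] a_less_b by simp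
  show "real (card (\<gamma> ` {a..b} \<inter> lattice v0 v1 v2)) < 2 + arclength b / c"
  proof (cases "F = {}")
    case True
    have "0 \<le> arclength b / c" using \<open>0 \<le> arclength b\<close> \<open>c > 0\<close> by simp
    thus ?thesis using card True by simp
  next
    case False
    have "c * (real (card F) - 2) < arclength (Max F) - arclength (Min F)"
    proof (rule card_bound_by_triple_spread[OF \<open>finite F\<close> False \<open>c > 0\<close>])
      show "arclength x < arclength y" if "x \<in> F" "y \<in> F" "x < y" for x y
        using that unfolding F_def by (intro arclength_strict_mono) auto
      show "2 * c \<le> arclength z - arclength x"
        if "x \<in> F" "y \<in> F" "z \<in> F" "x < y" "y < z" for x y z
        using that unfolding F_def c_def
        by (intro arclength_ge_of_lattice_triple[OF _ that(4,5) _ nondegenerate]) auto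
    qed
    also have "\<dots> \<le> arclength b"
    proof -
      have "Min F \<in> {a..b}" "Max F \<in> {a..b}"
        using False \<open>finite F\<close> Min_in Max_in unfolding F_def by blast+
      thus ?thesis using arclength_mono[of "Max F" b] arclength_mono[of a "Min F"] by simp
    qed
    finally have "real (card F) - 2 < arclength b / c"
      using \<open>c > 0\<close> by (simp add: field_simps)
    thus ?thesis using card by simp
  qed
qed

end

theorem theorem6p2:
  fixes \<gamma> g1 g2 :: "real \<Rightarrow> real^2" and a b R1 :: real and v0 v1 v2 :: "real^2"
  assumes curve: "open_convex_curve \<gamma> g1 g2 a b"
    and R1: "R1 > 0"
    and rho: "\<forall>t\<in>{a..b}. 1 / curvature g1 g2 t \<ge> R1"
    and indep: "det2 v1 v2 \<noteq> 0"
  shows "finite (\<gamma> ` {a..b} \<inter> lattice v0 v1 v2) \<and>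
         real (card (\<gamma> ` {a..b} \<inter> lattice v0 v1 v2))
           < 4 + curve_length g1 a b / (lattice_invariant v1 v2 * R1) powr (1/3) \<and>
         (total_curvature g1 g2 a b \<le> pi \<longrightarrow>
           real (card (\<gamma> ` {a..b} \<inter> lattice v0 v1 v2))
             < 2 + curve_length g1 a b / (lattice_invariant v1 v2 * R1) powr (1/3))"
proof -
  obtain K where "convex K" "interior K \<noteq> {}" "\<gamma> ` {a..b} \<subseteq> frontier K"
    using curve by (auto simp: open_convex_curve_def)
  then interpret convex_arc \<gamma> g1 g2 a b R1 K
    using curve R1 rho by unfold_locales (auto simp: open_convex_curve_def)
  have "curve_length g1 a b = arclength b"
    by (simp add: curve_length_def arclength_def)
  thus ?thesis using card_lattice_points_less[OF indep, of v0] by auto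
qed

end
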